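(* Let $m>2$ be an even integer, $n\ge 1$ an integer, and let $M_{2mn}=\langle a,b : a^m=b^{2n}=1,\ bab^{-1}=a^{-1}\rangle$ be the metacyclic group of order $2mn$. Let $\Gamma_{M_{2mn}}$ be its non-commuting graph. Then the spectrum of the distance matrix $D(\Gamma_{M_{2mn}})$ (eigenvalues counted with multiplicity, multiplicities being added if two of the listed values coincide) consists of: (a) $-2$ with multiplicity $2n(m-1)-\frac{m}{2}-1$; (b) $2n-2$ with multiplicity $\frac{m}{2}-1$; (c) $\frac{-(2n-3mn+4)+n\sqrt{5m^2-20m+36}}{2}$ and $\frac{-(2n-3mn+4)-n\sqrt{5m^2-20m+36}}{2}$, each with multiplicity $1$.
   Context: For a finite non-abelian group $G$ with centre $Z(G)$, the non-commuting graph $\Gamma_G$ is the simple undirected graph with vertex set $G\setminus Z(G)$, in which two distinct vertices $u,v$ are adjacent if and only if $uv\ne vu$. For a connected graph $H$, $d_{uv}$ denotes the length of a shortest path between vertices $u$ and $v$, and the distance matrix $D(H)$ is the matrix whose $(u,v)$-entry is $d_{uv}$. *)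

theory Defs
  imports "Jordan_Normal_Form.Char_Poly" "HOL-Library.Product_Lexorder"
begin

definition centre :: "'g set \<Rightarrow> ('g \<Rightarrow> 'g \<Rightarrow> 'g) \<Rightarrow> 'g set" where
  "centre G mul = {z \<in> G. \<forall>g\<in>G. mul z g = mul g z}"

definition nc_vertices :: "'g set \<Rightarrow> ('g \<Rightarrow> 'g \<Rightarrow> 'g) \<Rightarrow> 'g set" where
  "nc_vertices G mul = G - centre G mul"

definition nc_adj :: "'g set \<Rightarrow> ('g \<Rightarrow> 'g \<Rightarrow> 'g) \<Rightarrow> 'g \<Rightarrow> 'g \<Rightarrow> bool" where
  "nc_adj G mul u v \<longleftrightarrow> u \<in> nc_vertices G mul \<and> v \<in> nc_vertices G mul \<and> mul u v \<noteq> mul v u"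

definition nc_walk :: "'g set \<Rightarrow> ('g \<Rightarrow> 'g \<Rightarrow> 'g) \<Rightarrow> 'g list \<Rightarrow> bool" where
  "nc_walk G mul p \<longleftrightarrow> p \<noteq> [] \<and> set p \<subseteq> nc_vertices G mul \<and>
     (\<forall>i. Suc i < length p \<longrightarrow> nc_adj G mul (p ! i) (p ! Suc i))"

definition nc_dist :: "'g set \<Rightarrow> ('g \<Rightarrow> 'g \<Rightarrow> 'g) \<Rightarrow> 'g \<Rightarrow> 'g \<Rightarrow> nat" where
  "nc_dist G mul u v = (LEAST k. \<exists>p. nc_walk G mul p \<and> length p = Suc k \<and> hd p = u \<and> last p = v)"

definition nc_dist_matrix :: "('g::linorder) set \<Rightarrow> ('g \<Rightarrow> 'g \<Rightarrow> 'g) \<Rightarrow> real mat" where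
  "nc_dist_matrix G mul =
     (let vs = sorted_list_of_set (nc_vertices G mul)
      in mat (length vs) (length vs) (\<lambda>(i, j). real (nc_dist G mul (vs ! i) (vs ! j))))"

text \<open>The metacyclic group M_{2mn} = <a, b | a^m = b^(2n) = 1, b a b^(-1) = a^(-1)>,
  realised concretely: the pair (i, j) with i < m, j < 2n stands for a^i b^j, so
  (a^i1 b^j1)(a^i2 b^j2) = a^(i1 + (-1)^j1 i2) b^(j1 + j2).\<close>

definition M_carrier :: "nat \<Rightarrow> nat \<Rightarrow> (nat \<times> nat) set" where
  "M_carrier m n = {0..<m} \<times> {0..<2*n}"

definition M_mult :: "nat \<Rightarrow> nat \<Rightarrow> nat \<times> nat \<Rightarrow> nat \<times> nat \<Rightarrow> nat \<times> nat" where
  "M_mult m n x y =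
     ((fst x + (if even (snd x) then fst y else m - fst y)) mod m, (snd x + snd y) mod (2*n))"

end

theory Submission
  imports Defs
begin

text \<open>Write \<open>m = 2h\<close>. In \<open>M\<^sub>2\<^sub>m\<^sub>n\<close> the elements \<open>a\<^sup>i b\<^sup>j\<close> and \<open>a\<^sup>k b\<^sup>l\<close> commute iff
  \<open>j, l\<close> are both even, or exactly one of them is odd and the element with even \<open>b\<close>-exponent
  has \<open>a\<close>-exponent \<open>0\<close> or \<open>h\<close>, or both are odd and \<open>i \<equiv> k (mod h)\<close>. Hence the
  non-commuting graph is complete multipartite, with one part of the \<open>n(m - 2)\<close> non-central
  elements with even \<open>j\<close> and \<open>h\<close> parts \<open>{a\<^sup>i b\<^sup>j, a\<^sup>i\<^sup>+\<^sup>h b\<^sup>j : j odd}\<close> of size \<open>2n\<close>; distances are \<open>1\<close> across parts and \<open>2\<close>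
  within a part.

  For a complete multipartite graph with part sizes \<open>s\<^sub>1, \<dots>, s\<^sub>r\<close> one has \<open>D + 2I = U W\<close>, where
  \<open>U\<close> is the \<open>N \<times> r\<close> incidence matrix of the parts. Sylvester's identity
  \<open>det (cI - UW) c\<^sup>r = c\<^sup>N det (cI - WU)\<close> reduces the characteristic polynomial at \<open>c - 2\<close> to the
  \<open>r \<times> r\<close> determinant of \<open>diag (c - s\<^sub>k) - 1 s\<^sup>T\<close>, which the matrix determinant lemma evaluates
  to \<open>\<Prod>(c - s\<^sub>k) (1 - \<Sum> s\<^sub>k / (c - s\<^sub>k))\<close>. For the part sizes above this agrees with the claimed
  factorisation at all but three points, hence as polynomials.\<close>

section \<open>Distances in non-commuting graphs\<close>

lemma nc_walk_Nil [simp]: "\<not> nc_walk G mul []"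
  by (simp add: nc_walk_def)

lemma nc_walk_singleton [simp]: "nc_walk G mul [u] \<longleftrightarrow> u \<in> nc_vertices G mul"
  by (simp add: nc_walk_def)

lemma nc_walk_Cons_Cons [simp]:
  "nc_walk G mul (u # v # p) \<longleftrightarrow> nc_adj G mul u v \<and> nc_walk G mul (v # p)"
  unfolding nc_walk_def
  by (auto simp: nc_adj_def less_Suc_eq_0_disj)

lemma nc_walk_length_le_1: "nc_walk G mul p \<Longrightarrow> length p \<le> 1 \<Longrightarrow> hd p = last p"
  by (cases p) auto

lemma nc_walk_length_2: "nc_walk G mul p \<Longrightarrow> length p = 2 \<Longrightarrow> nc_adj G mul (hd p) (last p)"
  by (cases p rule: remdups_adj.cases) auto

lemma nc_dist_eqI:
  assumes "nc_walk G mul p" "hd p = u" "last p = v" "length p = Suc k"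
    and "\<And>q. nc_walk G mul q \<Longrightarrow> hd q = u \<Longrightarrow> last q = v \<Longrightarrow> Suc k \<le> length q"
  shows "nc_dist G mul u v = k"
  unfolding nc_dist_def
proof (rule Least_equality)
  show "\<exists>p. nc_walk G mul p \<and> length p = Suc k \<and> hd p = u \<and> last p = v"
    using assms(1-4) by blast
qed (use assms(5) in fastforce)

lemma nc_dist_self:
  assumes "u \<in> nc_vertices G mul"
  shows "nc_dist G mul u u = 0"
proof (rule nc_dist_eqI[of G mul "[u]"])
  show "Suc 0 \<le> length q" if "nc_walk G mul q" for q
    using that by (cases q) auto
qed (use assms in auto)

lemma nc_adj_neq: "nc_adj G mul u v \<Longrightarrow> u \<noteq> v"
  by (auto simp: nc_adj_def)

lemma nc_dist_adj:
  assumes "nc_adj G mul u v"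
  shows "nc_dist G mul u v = 1"
proof (rule nc_dist_eqI[of G mul "[u, v]"])
  fix q assume "nc_walk G mul q" "hd q = u" "last q = v"
  then show "Suc 1 \<le> length q"
    using nc_walk_length_le_1[of G mul q] nc_adj_neq[OF assms] by fastforce
qed (use assms in \<open>auto simp: nc_adj_def\<close>)

lemma nc_dist_common_neighbour:
  assumes "u \<noteq> v" "\<not> nc_adj G mul u v" "nc_adj G mul u w" "nc_adj G mul w v"
  shows "nc_dist G mul u v = 2"
proof (rule nc_dist_eqI[of G mul "[u, w, v]"])
  fix q assume "nc_walk G mul q" "hd q = u" "last q = v"
  then show "Suc 2 \<le> length q"
    using nc_walk_length_le_1[of G mul q] nc_walk_length_2[of G mul q] assms(1,2)
    by (cases "length q \<le> 1"; cases "length q = 2") auto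
qed (use assms in \<open>auto simp: nc_adj_def\<close>)

lemma nc_dist_complete_multipartite:
  fixes G :: "'g set" and mul :: "'g \<Rightarrow> 'g \<Rightarrow> 'g" and f :: "'g \<Rightarrow> 'p"
  defines "V \<equiv> nc_vertices G mul"
  assumes commute_iff: "\<And>u v. u \<in> V \<Longrightarrow> v \<in> V \<Longrightarrow> mul u v = mul v u \<longleftrightarrow> f u = f v"
    and other_part: "\<And>u. u \<in> V \<Longrightarrow> \<exists>w\<in>V. f w \<noteq> f u"
    and "u \<in> V" "v \<in> V"
  shows "nc_dist G mul u v = (if u = v then 0 else if f u = f v then 2 else 1)"
proof -
  have adj_iff: "nc_adj G mul x y \<longleftrightarrow> f x \<noteq> f y" if "x \<in> V" "y \<in> V" for x y
    using commute_iff[OF that] that by (simp add: nc_adj_def V_def)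
  show ?thesis
  proof (cases "u = v")
    case True
    then show ?thesis using \<open>u \<in> V\<close> by (simp add: nc_dist_self V_def)
  next
    case False
    show ?thesis
    proof (cases "f u = f v")
      case True
      obtain w where "w \<in> V" "f w \<noteq> f u" using other_part \<open>u \<in> V\<close> by blast
      then have "nc_dist G mul u v = 2"
        using \<open>u \<noteq> v\<close> True adj_iff \<open>u \<in> V\<close> \<open>v \<in> V\<close>
        by (intro nc_dist_common_neighbour[of u v G mul w]) auto
      then show ?thesis using \<open>u \<noteq> v\<close> True by simp
    next
      case False
      then show ?thesis using \<open>u \<noteq> v\<close> adj_iff \<open>u \<in> V\<close> \<open>v \<in> V\<close> by (simp add: nc_dist_adj)
    qed
  qed
qed

section \<open>Distance matrices of complete multipartite graphs\<close>

definition complete_multipartite_dist_mat :: "nat \<Rightarrow> (nat \<Rightarrow> nat) \<Rightarrow> real mat" where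
  "complete_multipartite_dist_mat N pt =
     mat N N (\<lambda>(i, j). if i = j then 0 else if pt i = pt j then 2 else 1)"

lemma nc_dist_matrix_complete_multipartite:
  fixes G :: "'g::linorder set" and mul :: "'g \<Rightarrow> 'g \<Rightarrow> 'g" and f :: "'g \<Rightarrow> nat"
  defines "V \<equiv> nc_vertices G mul"
  assumes "finite G"
    and "\<And>u v. u \<in> V \<Longrightarrow> v \<in> V \<Longrightarrow> mul u v = mul v u \<longleftrightarrow> f u = f v"
    and "\<And>u. u \<in> V \<Longrightarrow> \<exists>w\<in>V. f w \<noteq> f u"
  shows "nc_dist_matrix G mul =
    complete_multipartite_dist_mat (card V) (\<lambda>i. f (sorted_list_of_set V ! i))"
proof -
  define vs where "vs = sorted_list_of_set V"
  have "finite V" using \<open>finite G\<close> by (simp add: V_def nc_vertices_def)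
  then have vs: "distinct vs" "set vs = V" "length vs = card V" by (auto simp: vs_def)
  have "nc_dist G mul (vs ! i) (vs ! j) = (if i = j then 0 else if f (vs ! i) = f (vs ! j) then 2 else 1)"
    if "i < card V" "j < card V" for i j
  proof -
    have "vs ! i \<in> V" "vs ! j \<in> V" using that vs nth_mem by metis+
    then show ?thesis
      using nc_dist_complete_multipartite[of G mul f "vs ! i" "vs ! j"] assms(3,4) that vs
      by (simp add: V_def nth_eq_iff_index_eq)
  qed
  then show ?thesis
    unfolding nc_dist_matrix_def complete_multipartite_dist_mat_def Let_def
    by (intro eq_matI) (auto simp flip: V_def vs_def simp: vs(3))
qed

lemma sylvester_det_identity:
  fixes U V :: "'a :: field mat" and c :: 'a
  assumes U: "U \<in> carrier_mat N r" and V: "V \<in> carrier_mat r N" and c: "c \<noteq> 0"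
  shows "det (c \<cdot>\<^sub>m 1\<^sub>m N - U * V) * c ^ r = c ^ N * det (c \<cdot>\<^sub>m 1\<^sub>m r - V * U)"
proof -
  define M where "M = four_block_mat (c \<cdot>\<^sub>m 1\<^sub>m N) U V (1\<^sub>m r)"
  define L where "L = four_block_mat (1\<^sub>m N) (0\<^sub>m N r) (- ((1/c) \<cdot>\<^sub>m V)) (1\<^sub>m r)"
  define R where "R = four_block_mat (1\<^sub>m N) (0\<^sub>m N r) (- V) (1\<^sub>m r)"
  have Mc: "M \<in> carrier_mat (N+r) (N+r)" unfolding M_def using U V by auto
  have Lc: "L \<in> carrier_mat (N+r) (N+r)" unfolding L_def using U V by auto
  have Rc: "R \<in> carrier_mat (N+r) (N+r)" unfolding R_def using U V by auto
  have dL: "det L = 1" unfolding L_def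
    by (subst det_four_block_mat_upper_right_zero[of _ N _ r]) (use V in auto)
  have dR: "det R = 1" unfolding R_def
    by (subst det_four_block_mat_upper_right_zero[of _ N _ r]) (use V in auto)
  have LM: "L * M = four_block_mat (c \<cdot>\<^sub>m 1\<^sub>m N) U (0\<^sub>m r N) (1\<^sub>m r - (1/c) \<cdot>\<^sub>m (V * U))"
    unfolding L_def M_def using U V c
    by (subst mult_four_block_mat[of _ N N _ r _ r _ _ N _ r]) auto
  have MR: "M * R = four_block_mat (c \<cdot>\<^sub>m 1\<^sub>m N - U * V) U (0\<^sub>m r N) (1\<^sub>m r)"
    unfolding R_def M_def using U V c
    by (subst mult_four_block_mat[of _ N N _ r _ r _ _ N _ r]) auto
  have "c ^ N * det (1\<^sub>m r - (1/c) \<cdot>\<^sub>m (V * U)) = det (L * M)"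
    unfolding LM by (subst det_four_block_mat_lower_left_zero[of _ N _ r]) (use U V in auto)
  also have "\<dots> = det (M * R)" using det_mult[OF Lc Mc] det_mult[OF Mc Rc] dL dR by simp
  also have "\<dots> = det (c \<cdot>\<^sub>m 1\<^sub>m N - U * V)" unfolding MR
    by (subst det_four_block_mat_lower_left_zero[of _ N _ r]) (use U V in auto)
  finally have e: "det (c \<cdot>\<^sub>m 1\<^sub>m N - U * V) = c ^ N * det (1\<^sub>m r - (1/c) \<cdot>\<^sub>m (V * U))" by simp
  have "1\<^sub>m r - (1/c) \<cdot>\<^sub>m (V * U) = (1/c) \<cdot>\<^sub>m (c \<cdot>\<^sub>m 1\<^sub>m r - V * U)"
    by (rule eq_matI) (use U V c in \<open>auto simp: field_simps\<close>)
  then have "det (1\<^sub>m r - (1/c) \<cdot>\<^sub>m (V * U)) = (1/c)^r * det (c \<cdot>\<^sub>m 1\<^sub>m r - V * U)"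
    using U V by simp
  with e c show ?thesis by (simp add: field_simps)
qed

lemma det_diagonal_minus_rank_one:
  fixes d z :: "nat \<Rightarrow> 'a :: field"
  assumes "\<And>k. k < r \<Longrightarrow> d k \<noteq> 0"
  shows "det (mat r r (\<lambda>(k, l). (if k = l then d k else 0) - z l))
    = (\<Prod>k<r. d k) * (1 - (\<Sum>k<r. z k / d k))"
proof -
  define E where "E = mat r r (\<lambda>(k, l). if k = l then d k else 0)"
  define Y where "Y = mat r 1 (\<lambda>(k, _). 1 / d k)"
  define Z where "Z = mat 1 r (\<lambda>(_, l). z l)"
  have E: "E \<in> carrier_mat r r" and Y: "Y \<in> carrier_mat r 1" and Z: "Z \<in> carrier_mat 1 r"
    by (simp_all add: E_def Y_def Z_def)
  have factor: "mat r r (\<lambda>(k, l). (if k = l then d k else 0) - z l) = E * (1\<^sub>m r - Y * Z)"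
  proof (rule eq_matI)
    fix k l assume "k < dim_row (E * (1\<^sub>m r - Y * Z))" "l < dim_col (E * (1\<^sub>m r - Y * Z))"
    then have kl: "k < r" "l < r" using E Z by auto
    have "(E * (1\<^sub>m r - Y * Z)) $$ (k, l) = (\<Sum>j<r. (if k = j then d k else 0) * (1\<^sub>m r - Y * Z) $$ (j, l))"
      using kl E Y Z by (simp add: E_def scalar_prod_def atLeast0LessThan)
    also have "\<dots> = (\<Sum>j<r. if j = k then d k * (1\<^sub>m r - Y * Z) $$ (j, l) else 0)"
      by (rule sum.cong) auto
    also have "\<dots> = d k * (1\<^sub>m r - Y * Z) $$ (k, l)"
      using kl by simp
    also have "\<dots> = (if k = l then d k else 0) - z l"
      using kl Y Z assms[OF kl(1)] by (simp add: Y_def Z_def scalar_prod_def field_simps)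
    finally show "mat r r (\<lambda>(k, l). (if k = l then d k else 0) - z l) $$ (k, l) = (E * (1\<^sub>m r - Y * Z)) $$ (k, l)"
      using kl by simp
  qed (use E Z in auto)
  have "det E = (\<Prod>k<r. d k)"
  proof -
    have "det E = prod_list (diag_mat E)"
      using E by (intro det_upper_triangular) (auto simp: upper_triangular_def E_def)
    also have "diag_mat E = map d [0..<r]" by (auto simp: diag_mat_def E_def intro: nth_equalityI)
    finally show ?thesis by (simp add: prod.distinct_set_conv_list[symmetric] atLeast0LessThan)
  qed
  moreover have "det (1\<^sub>m r - Y * Z) = 1 - (\<Sum>k<r. z k / d k)"
  proof -
    have one: "(1::'a) \<cdot>\<^sub>m 1\<^sub>m k = 1\<^sub>m k" for k by (rule eq_matI) auto
    have "det (1\<^sub>m r - Y * Z) = det (1\<^sub>m 1 - Z * Y)"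
      using sylvester_det_identity[OF Y Z, of 1] by (simp add: one)
    also have "\<dots> = 1 - (Z * Y) $$ (0, 0)"
      using Y Z by (subst det_upper_triangular[of _ 1]) (auto simp: upper_triangular_def diag_mat_def)
    also have "(Z * Y) $$ (0, 0) = (\<Sum>k<r. z k / d k)"
      using Y Z by (simp add: Y_def Z_def scalar_prod_def atLeast0LessThan)
    finally show ?thesis .
  qed
  moreover have "1\<^sub>m r - Y * Z \<in> carrier_mat r r" using Y Z by auto
  ultimately show ?thesis
    unfolding factor by (simp add: det_mult[OF E])
qed

lemma poly_char_poly_complete_multipartite_dist_mat:
  fixes N r :: nat and pt :: "nat \<Rightarrow> nat" and c :: real
  defines "s \<equiv> \<lambda>k. real (card {i. i < N \<and> pt i = k})"
  assumes pt: "\<And>i. i < N \<Longrightarrow> pt i < r" and "c \<noteq> 0" and "\<And>k. k < r \<Longrightarrow> c \<noteq> s k"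
  shows "poly (char_poly (complete_multipartite_dist_mat N pt)) (c - 2) * c ^ r
    = c ^ N * (\<Prod>k<r. c - s k) * (1 - (\<Sum>k<r. s k / (c - s k)))"
proof -
  define D where "D = complete_multipartite_dist_mat N pt"
  define U :: "real mat" where "U = mat N r (\<lambda>(i, k). if pt i = k then 1 else 0)"
  define W :: "real mat" where "W = mat r N (\<lambda>(k, j). if pt j = k then 2 else 1)"
  have D: "D \<in> carrier_mat N N" and U: "U \<in> carrier_mat N r" and W: "W \<in> carrier_mat r N"
    by (simp_all add: D_def complete_multipartite_dist_mat_def U_def W_def)
  have UW: "(U * W) $$ (i, j) = (if pt i = pt j then 2 else 1)" if "i < N" "j < N" for i j
  proof -
    have "(U * W) $$ (i, j) = (\<Sum>k<r. (if pt i = k then 1 else 0) * (if pt j = k then 2 else 1))"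
      using that U W by (simp add: U_def W_def scalar_prod_def atLeast0LessThan)
    also have "\<dots> = (\<Sum>k<r. if k = pt i then (if pt j = pt i then 2 else 1) else 0)"
      by (rule sum.cong) auto
    also have "\<dots> = (if pt i = pt j then 2 else 1)" using pt[OF that(1)] by auto
    finally show ?thesis .
  qed
  have WU: "(W * U) $$ (k, l) = (if k = l then 2 else 1) * s l" if "k < r" "l < r" for k l
  proof -
    have "(W * U) $$ (k, l) = (\<Sum>i<N. (if pt i = k then 2 else 1) * (if pt i = l then 1 else 0))"
      using that U W by (simp add: U_def W_def scalar_prod_def atLeast0LessThan)
    also have "\<dots> = (\<Sum>i<N. if pt i = l then (if k = l then 2 else 1) else 0)"
      by (rule sum.cong) auto
    also have "\<dots> = (\<Sum>i\<in>{i. i < N \<and> pt i = l}. if k = l then 2 else 1)"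
      by (simp add: sum.If_cases Collect_conj_eq lessThan_def Int_commute)
    also have "\<dots> = (if k = l then 2 else 1) * s l"
      by (simp add: s_def mult.commute)
    finally show ?thesis .
  qed
  have "- char_matrix D (c - 2) = c \<cdot>\<^sub>m 1\<^sub>m N - U * W"
    using D U W UW by (intro eq_matI) (auto simp: char_matrix_def D_def complete_multipartite_dist_mat_def)
  then have "poly (char_poly D) (c - 2) * c ^ r = c ^ N * det (c \<cdot>\<^sub>m 1\<^sub>m r - W * U)"
    using char_poly_matrix[OF D] sylvester_det_identity[OF U W \<open>c \<noteq> 0\<close>] by simp
  also have "c \<cdot>\<^sub>m 1\<^sub>m r - W * U = mat r r (\<lambda>(k, l). (if k = l then c - s k else 0) - s l)"
    using U W WU by (intro eq_matI) (auto simp: algebra_simps)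
  also have "det \<dots> = (\<Prod>k<r. c - s k) * (1 - (\<Sum>k<r. s k / (c - s k)))"
    using assms(4) by (intro det_diagonal_minus_rank_one) simp
  finally show ?thesis by (simp add: D_def mult.assoc)
qed

lemma poly_char_poly_nc_dist_matrix_complete_multipartite:
  fixes G :: "'g::linorder set" and mul :: "'g \<Rightarrow> 'g \<Rightarrow> 'g" and f :: "'g \<Rightarrow> nat" and c :: real
  defines "V \<equiv> nc_vertices G mul"
  defines "s \<equiv> \<lambda>k. real (card {v \<in> V. f v = k})"
  assumes "finite G"
    and "\<And>u v. u \<in> V \<Longrightarrow> v \<in> V \<Longrightarrow> mul u v = mul v u \<longleftrightarrow> f u = f v"
    and "\<And>u. u \<in> V \<Longrightarrow> \<exists>w\<in>V. f w \<noteq> f u"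
    and "\<And>v. v \<in> V \<Longrightarrow> f v < r" and "c \<noteq> 0" and "\<And>k. k < r \<Longrightarrow> c \<noteq> s k"
  shows "poly (char_poly (nc_dist_matrix G mul)) (c - 2) * c ^ r
    = c ^ card V * (\<Prod>k<r. c - s k) * (1 - (\<Sum>k<r. s k / (c - s k)))"
proof -
  define vs where "vs = sorted_list_of_set V"
  have "finite V" using \<open>finite G\<close> by (simp add: V_def nc_vertices_def)
  then have vs: "distinct vs" "set vs = V" "length vs = card V" by (auto simp: vs_def)
  have "card {i. i < card V \<and> f (vs ! i) = k} = card {v \<in> V. f v = k}" for k
    using length_filter_conv_card[of "\<lambda>v. f v = k" vs] distinct_length_filter[OF vs(1)] vs
    by (simp add: Collect_conj_eq Int_commute)
  moreover have "f (vs ! i) < r" if "i < card V" for i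
    using assms(6) that vs nth_mem by metis
  moreover have "nc_dist_matrix G mul = complete_multipartite_dist_mat (card V) (\<lambda>i. f (vs ! i))"
    unfolding V_def vs_def
    by (rule nc_dist_matrix_complete_multipartite) (use assms(3-5) in \<open>simp_all add: V_def\<close>)
  ultimately show ?thesis
    using poly_char_poly_complete_multipartite_dist_mat[of "card V" "\<lambda>i. f (vs ! i)" r c] assms(7,8)
    by (simp add: s_def)
qed

section \<open>The metacyclic group \<open>M\<^sub>2\<^sub>m\<^sub>n\<close>\<close>

lemma nat_mod_eq_iff_int_dvd: "(a::nat) mod m = b mod m \<longleftrightarrow> int m dvd int a - int b"
  by (metis of_nat_eq_iff zmod_int mod_eq_dvd_iff)

lemma mod_double_swap_iff:
  fixes h i k :: nat
  assumes "i < 2*h" "k < 2*h"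
  shows "(i + (2*h - k)) mod (2*h) = (k + (2*h - i)) mod (2*h) \<longleftrightarrow> i mod h = k mod h"
proof -
  have "(i + (2*h - k)) mod (2*h) = (k + (2*h - i)) mod (2*h)
      \<longleftrightarrow> int (2*h) dvd int (i + (2*h - k)) - int (k + (2*h - i))"
    by (rule nat_mod_eq_iff_int_dvd)
  also have "int (i + (2*h - k)) - int (k + (2*h - i)) = 2 * (int i - int k)"
    using assms by simp
  also have "int (2*h) dvd 2 * (int i - int k) \<longleftrightarrow> int h dvd int i - int k"
    using dvd_times_left_cancel_iff[of 2 "int h" "int i - int k"] by simp
  also have "\<dots> \<longleftrightarrow> i mod h = k mod h"
    by (simp add: nat_mod_eq_iff_int_dvd)
  finally show ?thesis .
qed

lemma mod_double_neg_iff: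
  fixes h i k :: nat
  assumes "i < 2*h"
  shows "(i + k) mod (2*h) = (k + (2*h - i)) mod (2*h) \<longleftrightarrow> i = 0 \<or> i = h"
proof -
  have "(i + k) mod (2*h) = (k + (2*h - i)) mod (2*h)
      \<longleftrightarrow> int (2*h) dvd int (i + k) - int (k + (2*h - i))"
    by (rule nat_mod_eq_iff_int_dvd)
  also have "int (i + k) - int (k + (2*h - i)) = 2 * (int i - int h)"
    using assms by simp
  also have "int (2*h) dvd 2 * (int i - int h) \<longleftrightarrow> int h dvd int i - int h"
    using dvd_times_left_cancel_iff[of 2 "int h" "int i - int h"] by simp
  also have "\<dots> \<longleftrightarrow> h dvd i"
    by (metis dvd_diff dvd_refl diff_add_cancel dvd_add of_nat_dvd_iff)
  also have "\<dots> \<longleftrightarrow> i = 0 \<or> i = h"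
  proof
    assume "h dvd i"
    then obtain t where "i = h * t" by blast
    with assms show "i = 0 \<or> i = h" by (cases t) (auto simp: less_Suc_eq)
  qed auto
  finally show ?thesis .
qed

lemma M_mult_commute_iff:
  fixes h n i j k l :: nat
  assumes "i < 2*h" "k < 2*h"
  shows "M_mult (2*h) n (i, j) (k, l) = M_mult (2*h) n (k, l) (i, j) \<longleftrightarrow>
    (if even j then even l \<or> i = 0 \<or> i = h
     else if even l then k = 0 \<or> k = h else i mod h = k mod h)"
  using mod_double_swap_iff[OF assms] mod_double_neg_iff[of i h k] mod_double_neg_iff[of k h i] assms
  by (auto simp: M_mult_def add.commute)

lemma M_centre:
  assumes "h \<ge> 2" "n \<ge> 1"
  shows "centre (M_carrier (2*h) n) (M_mult (2*h) n) = {0, h} \<times> {j. j < 2*n \<and> even j}"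
proof (intro equalityI subsetI)
  fix z assume z: "z \<in> centre (M_carrier (2*h) n) (M_mult (2*h) n)"
  obtain i j where zij: "z = (i, j)" "i < 2*h" "j < 2*n"
    using z by (auto simp: centre_def M_carrier_def)
  have gens: "(1, 0) \<in> M_carrier (2*h) n" "(0, 1) \<in> M_carrier (2*h) n"
    using assms by (auto simp: M_carrier_def)
  have "M_mult (2*h) n (i, j) (1, 0) = M_mult (2*h) n (1, 0) (i, j)"
    using z zij gens by (auto simp: centre_def)
  then have "even j"
    using M_mult_commute_iff[of i h 1 n j 0] zij assms by (auto split: if_splits)
  have "M_mult (2*h) n (i, j) (0, 1) = M_mult (2*h) n (0, 1) (i, j)"
    using z zij gens by (auto simp: centre_def)
  then have "i = 0 \<or> i = h"
    using M_mult_commute_iff[of i h 0 n j 1] zij \<open>even j\<close> by simp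
  with zij \<open>even j\<close> show "z \<in> {0, h} \<times> {j. j < 2*n \<and> even j}" by auto
next
  fix z assume z: "z \<in> {0, h} \<times> {j. j < 2*n \<and> even j}"
  have "M_mult (2*h) n z g = M_mult (2*h) n g z" if "g \<in> M_carrier (2*h) n" for g
    using that z assms M_mult_commute_iff[of "fst z" h "fst g" n "snd z" "snd g"]
    by (auto simp: M_carrier_def)
  then show "z \<in> centre (M_carrier (2*h) n) (M_mult (2*h) n)"
    using z assms by (auto simp: centre_def M_carrier_def)
qed

lemma M_nc_vertices:
  assumes "h \<ge> 2" "n \<ge> 1"
  shows "nc_vertices (M_carrier (2*h) n) (M_mult (2*h) n) =
    {(i, j). i < 2*h \<and> j < 2*n \<and> (odd j \<or> (i \<noteq> 0 \<and> i \<noteq> h))}"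
  unfolding nc_vertices_def M_centre[OF assms] by (auto simp: M_carrier_def)

definition M_part :: "nat \<Rightarrow> nat \<times> nat \<Rightarrow> nat" where
  "M_part h v = (if even (snd v) then 0 else Suc (fst v mod h))"

lemma M_part_less: "h > 0 \<Longrightarrow> M_part h v < Suc h"
  by (simp add: M_part_def)

lemma M_commute_iff_same_part:
  assumes "h \<ge> 2" "n \<ge> 1"
    and "u \<in> nc_vertices (M_carrier (2*h) n) (M_mult (2*h) n)"
    and "v \<in> nc_vertices (M_carrier (2*h) n) (M_mult (2*h) n)"
  shows "M_mult (2*h) n u v = M_mult (2*h) n v u \<longleftrightarrow> M_part h u = M_part h v"
  using assms M_mult_commute_iff[of "fst u" h "fst v" n "snd u" "snd v"]
  by (auto simp: M_nc_vertices M_part_def)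

lemma M_exists_other_part:
  assumes "h \<ge> 2" "n \<ge> 1" "u \<in> nc_vertices (M_carrier (2*h) n) (M_mult (2*h) n)"
  shows "\<exists>w \<in> nc_vertices (M_carrier (2*h) n) (M_mult (2*h) n). M_part h w \<noteq> M_part h u"
proof (cases "M_part h u = 0")
  case True
  then show ?thesis using assms by (intro bexI[of _ "(0, 1)"]) (auto simp: M_nc_vertices M_part_def)
next
  case False
  then show ?thesis using assms by (intro bexI[of _ "(1, 0)"]) (auto simp: M_nc_vertices M_part_def)
qed

lemma card_even_less_double: "card {j::nat. j < 2*n \<and> even j} = n"
proof -
  have "{j::nat. j < 2*n \<and> even j} = (\<lambda>t. 2*t) ` {..<n}" by (auto elim!: evenE)
  then show ?thesis by (simp add: card_image inj_on_def)
qed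

lemma card_odd_less_double: "card {j::nat. j < 2*n \<and> odd j} = n"
proof -
  have "{j::nat. j < 2*n \<and> odd j} = (\<lambda>t. 2*t + 1) ` {..<n}" by (auto elim!: oddE)
  then show ?thesis by (simp add: card_image inj_on_def)
qed

lemma card_M_nc_vertices:
  assumes "h \<ge> 2" "n \<ge> 1"
  shows "card (nc_vertices (M_carrier (2*h) n) (M_mult (2*h) n)) = 2*n*(2*h - 1)"
proof -
  have sub: "centre (M_carrier (2*h) n) (M_mult (2*h) n) \<subseteq> M_carrier (2*h) n"
    by (auto simp: centre_def)
  have "card (nc_vertices (M_carrier (2*h) n) (M_mult (2*h) n))
      = card (M_carrier (2*h) n) - card (centre (M_carrier (2*h) n) (M_mult (2*h) n))"
    unfolding nc_vertices_def by (rule card_Diff_subset[OF finite_subset[OF sub] sub]) (simp add: M_carrier_def)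
  also have "\<dots> = 2*h * (2*n) - 2*n"
    unfolding M_centre[OF assms] using assms
    by (simp add: card_cartesian_product card_even_less_double M_carrier_def)
  finally show ?thesis by (simp add: algebra_simps diff_mult_distrib2)
qed

lemma card_M_part_0:
  assumes "h \<ge> 2" "n \<ge> 1"
  shows "card {v \<in> nc_vertices (M_carrier (2*h) n) (M_mult (2*h) n). M_part h v = 0} = n * (2*h - 2)"
proof -
  have "{v \<in> nc_vertices (M_carrier (2*h) n) (M_mult (2*h) n). M_part h v = 0}
      = ({..<2*h} - {0, h}) \<times> {j. j < 2*n \<and> even j}"
    using assms by (auto simp: M_nc_vertices M_part_def)
  moreover have "card ({..<2*h} - {0, h}) = 2*h - 2" using assms by (subst card_Diff_subset) auto
  ultimately show ?thesis by (simp add: card_cartesian_product card_even_less_double)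
qed

lemma card_M_part_Suc:
  assumes "h \<ge> 2" "n \<ge> 1" "k < h"
  shows "card {v \<in> nc_vertices (M_carrier (2*h) n) (M_mult (2*h) n). M_part h v = Suc k} = 2*n"
proof -
  have "{i. i < 2*h \<and> i mod h = k} = {k, k + h}"
  proof (intro equalityI subsetI)
    fix i assume i: "i \<in> {i. i < 2*h \<and> i mod h = k}"
    then have "i div h < 2" by (simp add: div_less_iff_less_mult mult.commute)
    then have "i div h = 0 \<or> i div h = 1" by auto
    then show "i \<in> {k, k + h}" using i div_mult_mod_eq[of i h] by auto
  qed (use assms in auto)
  moreover have "{v \<in> nc_vertices (M_carrier (2*h) n) (M_mult (2*h) n). M_part h v = Suc k}
      = {i. i < 2*h \<and> i mod h = k} \<times> {j. j < 2*n \<and> odd j}"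
    using assms by (auto simp: M_nc_vertices M_part_def)
  ultimately show ?thesis using assms by (simp add: card_cartesian_product card_odd_less_double)
qed

lemma poly_char_poly_M_dist_matrix_part_sizes:
  fixes h n :: nat and c :: real
  defines "a \<equiv> real n * (2 * real h - 2)"
  assumes "h \<ge> 2" "n \<ge> 1" and c: "c \<noteq> 0" "c \<noteq> a" "c \<noteq> 2 * real n"
  shows "poly (char_poly (nc_dist_matrix (M_carrier (2*h) n) (M_mult (2*h) n))) (c - 2) * c ^ Suc h
    = c ^ (2*n*(2*h - 1)) * ((c - a) * (c - 2 * real n) ^ h) * (1 - (a / (c - a) + h * (2 * real n / (c - 2 * real n))))"
proof -
  define V where "V = nc_vertices (M_carrier (2*h) n) (M_mult (2*h) n)"
  define s where "s k = real (card {v \<in> V. M_part h v = k})" for k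
  have s_0: "s 0 = a"
    using card_M_part_0[OF assms(2,3)] assms(2) by (simp add: s_def a_def V_def)
  have s_Suc: "s (Suc k) = 2 * real n" if "k < h" for k
    using card_M_part_Suc[OF assms(2,3) that] by (simp add: s_def V_def)
  have "poly (char_poly (nc_dist_matrix (M_carrier (2*h) n) (M_mult (2*h) n))) (c - 2) * c ^ Suc h
      = c ^ card V * (\<Prod>k<Suc h. c - s k) * (1 - (\<Sum>k<Suc h. s k / (c - s k)))"
    unfolding s_def V_def
  proof (rule poly_char_poly_nc_dist_matrix_complete_multipartite)
    show "finite (M_carrier (2*h) n)" by (simp add: M_carrier_def)
    show "c \<noteq> real (card {v \<in> nc_vertices (M_carrier (2*h) n) (M_mult (2*h) n). M_part h v = k})"
      if "k < Suc h" for k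
      using that c s_0 s_Suc by (cases k) (auto simp: s_def V_def)
  qed (use assms M_commute_iff_same_part M_exists_other_part M_part_less in auto)
  also have "card V = 2*n*(2*h - 1)"
    using card_M_nc_vertices[OF assms(2,3)] by (simp add: V_def)
  also have "(\<Prod>k<Suc h. c - s k) = (c - a) * (c - 2 * real n) ^ h"
  proof -
    have "(\<Prod>k<h. c - s (Suc k)) = (\<Prod>k<h. c - 2 * real n)" by (rule prod.cong) (simp_all add: s_Suc)
    then show ?thesis unfolding prod.lessThan_Suc_shift by (simp add: s_0)
  qed
  also have "(\<Sum>k<Suc h. s k / (c - s k)) = a / (c - a) + h * (2 * real n / (c - 2 * real n))"
  proof -
    have "(\<Sum>k<h. s (Suc k) / (c - s (Suc k))) = (\<Sum>k<h. 2 * real n / (c - 2 * real n))"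
      by (rule sum.cong) (simp_all add: s_Suc)
    then show ?thesis unfolding sum.lessThan_Suc_shift by (simp add: s_0)
  qed
  finally show ?thesis .
qed

lemma poly_char_poly_M_dist_matrix:
  fixes c :: real
  assumes "h \<ge> 2" "n \<ge> 1" and c: "c \<noteq> 0" "c \<noteq> real n * (2 * real h - 2)" "c \<noteq> 2 * real n"
  shows "poly (char_poly (nc_dist_matrix (M_carrier (2*h) n) (M_mult (2*h) n))) (c - 2)
    = c ^ (2*n*(2*h - 1) - Suc h) * (c - 2 * real n) ^ (h - 1)
      * (c^2 - (6 * real h - 2) * n * c + (2 * real h - 2) * (2 * real h + 4) * (real n)^2)"
proof -
  define a where "a = real n * (2 * real h - 2)"
  have "A * B * (1 - (a / A + h * (k / B))) = A * B - a * B - k * h * A"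
    if "A \<noteq> 0" "B \<noteq> 0" for A B k :: real
    using that by (simp add: field_simps)
  then have "(c - a) * (c - 2 * real n) * (1 - (a / (c - a) + h * (2 * real n / (c - 2 * real n))))
      = (c - a) * (c - 2 * real n) - a * (c - 2 * real n) - 2 * real n * h * (c - a)"
    using c by (simp add: a_def)
  also have "\<dots> = c^2 - (6 * real h - 2) * n * c + (2 * real h - 2) * (2 * real h + 4) * (real n)^2"
    by (simp add: a_def power2_eq_square algebra_simps)
  finally have quadratic: "(c - a) * (c - 2 * real n) * (1 - (a / (c - a) + h * (2 * real n / (c - 2 * real n))))
      = c^2 - (6 * real h - 2) * n * c + (2 * real h - 2) * (2 * real h + 4) * (real n)^2" .
  have "2*n*(2*h - 1) \<ge> 2*(2*h - 1)" using \<open>n \<ge> 1\<close> by simp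
  then have "2*n*(2*h - 1) = (2*n*(2*h - 1) - Suc h) + Suc h" using \<open>h \<ge> 2\<close> by linarith
  then have "c ^ (2*n*(2*h - 1)) = c ^ (2*n*(2*h - 1) - Suc h) * c ^ Suc h"
    by (metis power_add)
  moreover have "(c - 2 * real n) ^ h = (c - 2 * real n) ^ (h - 1) * (c - 2 * real n)"
    using \<open>h \<ge> 2\<close> by (simp flip: power_Suc2)
  ultimately have "poly (char_poly (nc_dist_matrix (M_carrier (2*h) n) (M_mult (2*h) n))) (c - 2) * c ^ Suc h
      = (c ^ (2*n*(2*h - 1) - Suc h) * (c - 2 * real n) ^ (h - 1)
         * (c^2 - (6 * real h - 2) * n * c + (2 * real h - 2) * (2 * real h + 4) * (real n)^2)) * c ^ Suc h"
    using poly_char_poly_M_dist_matrix_part_sizes[OF assms] unfolding a_def[symmetric] quadratic[symmetric]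
    by (simp only: mult_ac)
  then show ?thesis using c by simp
qed

lemma eigenvalue_pair_product:
  fixes x m n :: real
  shows "(x - (-(2*n - 3*m*n + 4) + n * sqrt (5*m^2 - 20*m + 36)) / 2)
       * (x - (-(2*n - 3*m*n + 4) - n * sqrt (5*m^2 - 20*m + 36)) / 2)
     = (x + 2)^2 - (3*m - 2) * n * (x + 2) + (m - 2) * (m + 4) * n^2"
proof -
  define S where "S = sqrt (5*m^2 - 20*m + 36)"
  have "5*m^2 - 20*m + 36 = 5 * (m - 2)^2 + 16" by (simp add: power2_eq_square algebra_simps)
  then have "5*m^2 - 20*m + 36 \<ge> 0" using zero_le_power2[of "m - 2"] by linarith
  then have S2: "S^2 = 5*m^2 - 20*m + 36" by (simp add: S_def)
  have "(x - (-(2*n - 3*m*n + 4) + n * S) / 2) * (x - (-(2*n - 3*m*n + 4) - n * S) / 2)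
      = (x + (2*n - 3*m*n + 4) / 2)^2 - n^2 * S^2 / 4"
    by (simp add: power2_eq_square field_simps)
  also have "\<dots> = (x + 2)^2 - (3*m - 2) * n * (x + 2) + (m - 2) * (m + 4) * n^2"
    unfolding S2 by (simp add: power2_eq_square field_simps)
  finally show ?thesis unfolding S_def .
qed

lemma poly_eqI_cofinite:
  fixes p q :: "'a :: {idom, ring_char_0} poly"
  assumes "finite S" "\<And>x. x \<notin> S \<Longrightarrow> poly p x = poly q x"
  shows "p = q"
proof (rule ccontr)
  assume "p \<noteq> q"
  then have "finite {x. poly (p - q) x = 0}" by (intro poly_roots_finite) simp
  moreover have "- S \<subseteq> {x. poly (p - q) x = 0}" using assms(2) by auto
  ultimately have "finite (- S)" by (rule finite_subset[rotated])
  with \<open>finite S\<close> show False by (simp add: infinite_UNIV_char_0 flip: Compl_eq_Diff_UNIV)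
qed

theorem theorem6p2:
  fixes m n :: nat
  assumes "even m" and "m > 2" and "n \<ge> 1"
  shows "char_poly (nc_dist_matrix (M_carrier m n) (M_mult m n)) =
     [:2, 1:] ^ (2*n*(m-1) - m div 2 - 1)
     * [:- (2*real n - 2), 1:] ^ (m div 2 - 1)
     * [:- ((-(2*real n - 3*real m*real n + 4) + real n * sqrt (5*(real m)^2 - 20*real m + 36)) / 2), 1:]
     * [:- ((-(2*real n - 3*real m*real n + 4) - real n * sqrt (5*(real m)^2 - 20*real m + 36)) / 2), 1:]"
proof -
  obtain h where m: "m = 2*h" using \<open>even m\<close> by blast
  have "h \<ge> 2" using \<open>m > 2\<close> m by simp
  have exponents: "2*n*(m-1) - m div 2 - 1 = 2*n*(2*h - 1) - Suc h" "m div 2 - 1 = h - 1"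
    using m by auto
  have linear: "poly [:2, 1:] x = x + 2" "poly [:- a, 1:] x = x - a" for a x :: real
    by simp_all
  show ?thesis
  proof (rule poly_eqI_cofinite[of "{-2, real n * (2 * real h - 2) - 2, 2 * real n - 2}"], goal_cases)
    case (2 x)
    have char: "poly (char_poly (nc_dist_matrix (M_carrier m n) (M_mult m n))) x
        = (x + 2) ^ (2*n*(2*h - 1) - Suc h) * (x - (2 * real n - 2)) ^ (h - 1)
          * ((x + 2)^2 - (3 * real m - 2) * n * (x + 2) + (real m - 2) * (real m + 4) * (real n)^2)"
      using poly_char_poly_M_dist_matrix[OF \<open>h \<ge> 2\<close> \<open>n \<ge> 1\<close>, of "x + 2"] 2 m
      by (auto simp: algebra_simps)
    show ?case
      unfolding poly_mult poly_power linear exponents char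
      unfolding mult.assoc[of "_ ^ _ * _ ^ _"]
        eigenvalue_pair_product[where x = x and m = "real m" and n = "real n"] ..
  qed simp
qed

end
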